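(* Let $X,Y,Z$ be spaces, let $r\colon Y\to Z$ be a surjective continuous map, and let $r_{\ast}\colon Q_{P}(X,Y)\to Q_{P}(X,Z)$ be the induced map $r_{\ast}(f)=r\circ f$. Then $r_{\ast}(Q_{P}(X,Y))$ is dense in $Q_{P}(X,Z)$.
   Context: A function $f\colon X\to Y$ between topological spaces is quasi-continuous at $x\in X$ if for every open $U\ni x$ and every open $V\ni f(x)$ there is a non-empty open $G\subseteq U$ with $f(G)\subseteq V$; $f$ is quasi-continuous if it is so at every point. $Q_{P}(X,Y)$ is the set of quasi-continuous functions $X\to Y$ with the topology of point-wise convergence, whose base consists of the sets $[x_1,\dots,x_n;U_1,\dots,U_n]=\{f: f(x_i)\in U_i,\ 1\le i\le n\}$ with $x_i\in X$, $U_i$ open in $Y$; similarly for $Q_P(X,Z)$. *)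

theory Defs
  imports "HOL-Analysis.Analysis"
begin

definition quasi_continuous_at :: "'a topology \<Rightarrow> 'b topology \<Rightarrow> ('a \<Rightarrow> 'b) \<Rightarrow> 'a \<Rightarrow> bool" where
  "quasi_continuous_at X Y f x \<longleftrightarrow>
     (\<forall>U V. openin X U \<and> x \<in> U \<and> openin Y V \<and> f x \<in> V \<longrightarrow>
        (\<exists>G. openin X G \<and> G \<noteq> {} \<and> G \<subseteq> U \<and> f ` G \<subseteq> V))"

definition quasi_continuous :: "'a topology \<Rightarrow> 'b topology \<Rightarrow> ('a \<Rightarrow> 'b) \<Rightarrow> bool" where
  "quasi_continuous X Y f \<longleftrightarrow>
     f \<in> topspace X \<rightarrow> topspace Y \<and> (\<forall>x\<in>topspace X. quasi_continuous_at X Y f x)"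

definition QC :: "'a topology \<Rightarrow> 'b topology \<Rightarrow> ('a \<Rightarrow> 'b) set" where
  "QC X Y = {f. quasi_continuous X Y f \<and> f \<in> extensional (topspace X)}"

text \<open>Q_P(X,Y): topology of pointwise convergence, i.e. the subspace topology
  induced by the Tychonoff product of copies of Y indexed by the points of X.\<close>
definition QP :: "'a topology \<Rightarrow> 'b topology \<Rightarrow> ('a \<Rightarrow> 'b) topology" where
  "QP X Y = subtopology (product_topology (\<lambda>_. Y) (topspace X)) (QC X Y)"

definition induced_map :: "'a topology \<Rightarrow> ('b \<Rightarrow> 'c) \<Rightarrow> ('a \<Rightarrow> 'b) \<Rightarrow> ('a \<Rightarrow> 'c)" where
  "induced_map X r f = restrict (r \<circ> f) (topspace X)"

end

theory Submission
  imports Defs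
begin

text \<open>
  Let g be quasi-continuous into Z and prescribe open sets U p \<ni> g p at finitely many
  points p \<in> F. With S p the interior of the preimage of U p under g, quasi-continuity of g
  at p says precisely that p lies in the closure of S p. For T \<subseteq> F the Venn cell of
  pattern T is the interior of the set of points that lie in S p for p \<in> T and outside the
  closure of S p for p \<notin> T. Measuring "outside" against the closure makes cells of
  different patterns disjoint, while still every nonempty open subset of the intersection of
  some S p, p \<in> P, meets a cell whose pattern contains P; hence every point adheres to some
  cell, and each p \<in> F to a cell whose pattern contains p. Choosing, through the surjection r,
  one lift of a value of g on each nonempty cell and letting f take at x the value of a cell
  adherent to x yields a quasi-continuous f with r (f p) \<in> U p for all p \<in> F, so r \<circ> f
  lies in the prescribed basic neighbourhood of g.
\<close>

lemma quasi_continuous_atD: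
  assumes "quasi_continuous_at X Y f x" "openin X U" "x \<in> U" "openin Y V" "f x \<in> V"
  obtains G where "openin X G" "G \<noteq> {}" "G \<subseteq> U" "f ` G \<subseteq> V"
  using assms unfolding quasi_continuous_at_def by meson

lemma quasi_continuous_at_in_closure_of_interior:
  assumes "quasi_continuous_at X Y g x" "x \<in> topspace X" "openin Y U" "g x \<in> U"
  shows "x \<in> X closure_of (X interior_of {z \<in> topspace X. g z \<in> U})"
proof -
  have "\<exists>z. z \<in> X interior_of {z \<in> topspace X. g z \<in> U} \<and> z \<in> V"
    if "x \<in> V" "openin X V" for V
  proof -
    obtain G where G: "openin X G" "G \<noteq> {}" "G \<subseteq> V" "g ` G \<subseteq> U"
      using quasi_continuous_atD[OF assms(1) \<open>openin X V\<close> \<open>x \<in> V\<close> assms(3,4)] .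
    have "G \<subseteq> {z \<in> topspace X. g z \<in> U}"
      using openin_subset[OF G(1)] G(4) by blast
    then have "G \<subseteq> X interior_of {z \<in> topspace X. g z \<in> U}"
      using G(1) by (rule interior_of_maximal)
    then show ?thesis
      using G(2,3) by blast
  qed
  then show ?thesis
    using assms(2) unfolding in_closure_of by blast
qed

lemma quasi_continuous_if_constant_on_adherent_open:
  assumes "f \<in> topspace X \<rightarrow> topspace Y"
    and "\<And>x. x \<in> topspace X \<Longrightarrow> openin X (C x)"
    and "\<And>x. x \<in> topspace X \<Longrightarrow> x \<in> X closure_of C x"
    and "\<And>x z. x \<in> topspace X \<Longrightarrow> z \<in> C x \<Longrightarrow> f z = f x"
  shows "quasi_continuous X Y f"
proof -
  have "quasi_continuous_at X Y f x" if x: "x \<in> topspace X" for x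
    unfolding quasi_continuous_at_def
  proof (intro allI impI, elim conjE)
    fix V W assume V: "openin X V" "x \<in> V" and W: "f x \<in> W"
    have "V \<inter> C x \<noteq> {}"
      using assms(3)[OF x] V openin_Int_closure_of_eq_empty[of X V "C x"] by blast
    moreover have "openin X (V \<inter> C x)"
      using V(1) assms(2)[OF x] by blast
    moreover have "f ` (V \<inter> C x) \<subseteq> W"
      using assms(4)[OF x] W by auto
    ultimately show "\<exists>G. openin X G \<and> G \<noteq> {} \<and> G \<subseteq> V \<and> f ` G \<subseteq> W"
      by blast
  qed
  then show ?thesis
    using assms(1) unfolding quasi_continuous_def by blast
qed

lemma quasi_continuous_piecewise_constant:
  assumes cell_open: "\<And>A. A \<in> \<A> \<Longrightarrow> openin X (C A)"
    and cells_disjoint: "\<And>A B z. A \<in> \<A> \<Longrightarrow> B \<in> \<A> \<Longrightarrow> z \<in> C A \<Longrightarrow> z \<in> C B \<Longrightarrow> A = B"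
    and adherent: "\<And>x. x \<in> topspace X \<Longrightarrow> T x \<in> \<A> \<and> x \<in> X closure_of C (T x)"
    and v_range: "\<And>x. x \<in> topspace X \<Longrightarrow> v (T x) \<in> topspace Y"
  shows "quasi_continuous X Y (restrict (\<lambda>x. v (T x)) (topspace X))"
proof (rule quasi_continuous_if_constant_on_adherent_open[where C = "\<lambda>x. C (T x)"])
  show "restrict (\<lambda>x. v (T x)) (topspace X) \<in> topspace X \<rightarrow> topspace Y"
    using v_range by (rule restrictI)
  show "openin X (C (T x))" if "x \<in> topspace X" for x
    using adherent[OF that] cell_open by blast
  show "x \<in> X closure_of C (T x)" if "x \<in> topspace X" for x
    using adherent[OF that] by blast
  show "restrict (\<lambda>x. v (T x)) (topspace X) z = restrict (\<lambda>x. v (T x)) (topspace X) x"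
    if x: "x \<in> topspace X" and z: "z \<in> C (T x)" for x z
  proof -
    have open_x: "openin X (C (T x))"
      using adherent[OF x] cell_open by blast
    then have zX: "z \<in> topspace X"
      using z openin_subset by blast
    have "C (T x) \<inter> X closure_of C (T z) \<noteq> {}"
      using z adherent[OF zX] by blast
    then have "C (T x) \<inter> C (T z) \<noteq> {}"
      using openin_Int_closure_of_eq_empty[OF open_x, of "C (T z)"] by simp
    then have "T z = T x"
      using cells_disjoint[of "T z" "T x"] adherent[OF x] adherent[OF zX] by blast
    then show ?thesis
      using x zX by simp
  qed
qed

lemma quasi_continuous_cong:
  assumes "\<And>x. x \<in> topspace X \<Longrightarrow> f x = g x"
  shows "quasi_continuous X Y f \<longleftrightarrow> quasi_continuous X Y g"
proof -
  have image_eq: "f ` G = g ` G" if "openin X G" for G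
    using assms openin_subset[OF that] by (intro image_cong) auto
  have "quasi_continuous_at X Y f x \<longleftrightarrow> quasi_continuous_at X Y g x" if "x \<in> topspace X" for x
    unfolding quasi_continuous_at_def by (simp add: that assms image_eq cong: conj_cong)
  then show ?thesis
    unfolding quasi_continuous_def by (simp add: Pi_iff assms)
qed

lemma quasi_continuous_continuous_map_compose:
  assumes r: "continuous_map Y Z r" and f: "quasi_continuous X Y f"
  shows "quasi_continuous X Z (r \<circ> f)"
proof -
  have fY: "f \<in> topspace X \<rightarrow> topspace Y"
    using f unfolding quasi_continuous_def by blast
  have "quasi_continuous_at X Z (r \<circ> f) x" if x: "x \<in> topspace X" for x
    unfolding quasi_continuous_at_def
  proof (intro allI impI, elim conjE)
    fix U W assume U: "openin X U" "x \<in> U" and W: "openin Z W" "(r \<circ> f) x \<in> W"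
    have qc: "quasi_continuous_at X Y f x"
      using f x unfolding quasi_continuous_def by blast
    have "openin Y {y \<in> topspace Y. r y \<in> W}"
      using r W(1) by (rule openin_continuous_map_preimage)
    moreover have "f x \<in> {y \<in> topspace Y. r y \<in> W}"
      using fY x W(2) by auto
    ultimately obtain G where G: "openin X G" "G \<noteq> {}" "G \<subseteq> U"
      and fG: "f ` G \<subseteq> {y \<in> topspace Y. r y \<in> W}"
      using quasi_continuous_atD[OF qc U] by blast
    from fG have "(r \<circ> f) ` G \<subseteq> W"
      by auto
    with G show "\<exists>G. openin X G \<and> G \<noteq> {} \<and> G \<subseteq> U \<and> (r \<circ> f) ` G \<subseteq> W"
      by blast
  qed
  moreover have "r \<circ> f \<in> topspace X \<rightarrow> topspace Z"
    using fY continuous_map_funspace[OF r] by auto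
  ultimately show ?thesis
    unfolding quasi_continuous_def by blast
qed

lemma induced_map_in_QC:
  assumes "continuous_map Y Z r" "f \<in> QC X Y"
  shows "induced_map X r f \<in> QC X Z"
proof -
  have "quasi_continuous X Z (r \<circ> f)"
    using quasi_continuous_continuous_map_compose assms unfolding QC_def by blast
  then have "quasi_continuous X Z (induced_map X r f)"
    using quasi_continuous_cong[of X "induced_map X r f" "r \<circ> f"] by (simp add: induced_map_def)
  then show ?thesis
    unfolding QC_def induced_map_def by simp
qed

definition venn_cell :: "'a topology \<Rightarrow> ('i \<Rightarrow> 'a set) \<Rightarrow> 'i set \<Rightarrow> 'i set \<Rightarrow> 'a set" where
  "venn_cell X S A T =
     X interior_of {x \<in> topspace X. (\<forall>i\<in>T. x \<in> S i) \<and> (\<forall>i\<in>A - T. x \<notin> X closure_of S i)}"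

lemma openin_venn_cell [simp]: "openin X (venn_cell X S A T)"
  by (simp add: venn_cell_def)

lemma venn_cellD:
  assumes "x \<in> venn_cell X S A T"
  shows "x \<in> topspace X" and "i \<in> T \<Longrightarrow> x \<in> S i" and "i \<in> A - T \<Longrightarrow> x \<notin> X closure_of S i"
proof -
  have "x \<in> {x \<in> topspace X. (\<forall>i\<in>T. x \<in> S i) \<and> (\<forall>i\<in>A - T. x \<notin> X closure_of S i)}"
    using assms unfolding venn_cell_def by (rule subsetD[OF interior_of_subset])
  then show "x \<in> topspace X" and "i \<in> T \<Longrightarrow> x \<in> S i" and "i \<in> A - T \<Longrightarrow> x \<notin> X closure_of S i"
    by simp_all
qed

lemma venn_cells_disjoint:
  assumes "T \<subseteq> A" "T' \<subseteq> A" "x \<in> venn_cell X S A T" "x \<in> venn_cell X S A T'"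
  shows "T = T'"
proof -
  have closure: "x \<in> X closure_of S i" if "x \<in> S i" for i
    using that venn_cellD(1)[OF assms(3)] unfolding in_closure_of by blast
  have "i \<in> T \<longleftrightarrow> i \<in> T'" if "i \<in> A" for i
    using venn_cellD(2,3)[OF assms(3), of i] venn_cellD(2,3)[OF assms(4), of i] closure[of i] that
    by blast
  then show ?thesis
    using assms(1,2) by blast
qed

lemma open_subset_inside_or_apart:
  assumes "finite A" "\<And>i. openin X (S i)" "openin X G" "G \<noteq> {}"
  shows "\<exists>T H. T \<subseteq> A \<and> openin X H \<and> H \<noteq> {} \<and> H \<subseteq> G \<and>
           (\<forall>i\<in>T. H \<subseteq> S i) \<and> (\<forall>i\<in>A - T. disjnt H (X closure_of S i))"
  using assms(1)
proof (induction A rule: finite_induct)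
  case empty
  show ?case
    using assms(3,4) by blast
next
  case (insert a A)
  then obtain T H where TH: "T \<subseteq> A" "openin X H" "H \<noteq> {}" "H \<subseteq> G"
    "\<forall>i\<in>T. H \<subseteq> S i" "\<forall>i\<in>A - T. disjnt H (X closure_of S i)"
    by blast
  show ?case
  proof (cases "H \<inter> S a = {}")
    case True
    then have "disjnt H (X closure_of S a)"
      using openin_Int_closure_of_eq_empty[OF TH(2), of "S a"] by (simp add: disjnt_def)
    then have "\<forall>i\<in>insert a A - T. disjnt H (X closure_of S i)"
      using TH(6) by blast
    moreover have "T \<subseteq> insert a A"
      using TH(1) by blast
    ultimately show ?thesis
      using TH(2-5) by blast
  next
    case False
    have "openin X (H \<inter> S a)"
      using TH(2) assms(2) by blast
    moreover have "\<forall>i\<in>insert a T. H \<inter> S a \<subseteq> S i"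
      using TH(5) by blast
    moreover have "\<forall>i\<in>insert a A - insert a T. disjnt (H \<inter> S a) (X closure_of S i)"
      using TH(6) disjnt_subset1[of H _ "H \<inter> S a"] by blast
    moreover have "insert a T \<subseteq> insert a A" "H \<inter> S a \<subseteq> G"
      using TH(1,4) by blast+
    ultimately show ?thesis
      using False by blast
  qed
qed

lemma open_meets_venn_cell:
  assumes "finite A" "\<And>i. openin X (S i)" "openin X G" "G \<noteq> {}"
    and "P \<subseteq> A" "\<And>i. i \<in> P \<Longrightarrow> G \<subseteq> S i"
  obtains T where "P \<subseteq> T" "T \<subseteq> A" "G \<inter> venn_cell X S A T \<noteq> {}"
proof -
  obtain T H where TH: "T \<subseteq> A" "openin X H" "H \<noteq> {}" "H \<subseteq> G"
    "\<forall>i\<in>T. H \<subseteq> S i" "\<forall>i\<in>A - T. disjnt H (X closure_of S i)"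
    using open_subset_inside_or_apart[OF assms(1-4)] by meson
  have "H \<subseteq> {x \<in> topspace X. (\<forall>i\<in>T. x \<in> S i) \<and> (\<forall>i\<in>A - T. x \<notin> X closure_of S i)}"
    using openin_subset[OF TH(2)] TH(5,6) unfolding disjnt_iff by blast
  then have H_cell: "H \<subseteq> venn_cell X S A T"
    unfolding venn_cell_def using TH(2) by (rule interior_of_maximal)
  have "P \<subseteq> T"
  proof
    fix i assume i: "i \<in> P"
    show "i \<in> T"
    proof (rule ccontr)
      assume "i \<notin> T"
      then have "disjnt H (X closure_of S i)"
        using TH(6) i assms(5) by blast
      moreover have "H \<subseteq> S i"
        using TH(4) assms(6)[OF i] by blast
      ultimately show False
        using TH(3) openin_Int_closure_of_eq_empty[OF TH(2), of "S i"] unfolding disjnt_def by blast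
    qed
  qed
  moreover have "G \<inter> venn_cell X S A T \<noteq> {}"
    using TH(3,4) H_cell by blast
  ultimately show ?thesis
    using TH(1) by (intro that)
qed

lemma in_closure_of_venn_cell:
  assumes "finite A" "\<And>i. openin X (S i)" "openin X W" "x \<in> X closure_of W"
    and "P \<subseteq> A" "\<And>i. i \<in> P \<Longrightarrow> W \<subseteq> S i"
  obtains T where "P \<subseteq> T" "T \<subseteq> A" "x \<in> X closure_of venn_cell X S A T"
proof -
  define cells where "cells = venn_cell X S A ` {T. P \<subseteq> T \<and> T \<subseteq> A}"
  have "{T. P \<subseteq> T \<and> T \<subseteq> A} \<subseteq> Pow A"
    by blast
  then have "finite cells"
    unfolding cells_def using assms(1) by (simp add: finite_subset)
  have "\<exists>y. y \<in> \<Union>cells \<and> y \<in> V" if V: "x \<in> V" "openin X V" for V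
  proof -
    have "openin X (V \<inter> W)"
      using V(2) assms(3) by blast
    moreover have "V \<inter> W \<noteq> {}"
      using assms(4) V openin_Int_closure_of_eq_empty[OF V(2), of W] by blast
    moreover have "V \<inter> W \<subseteq> S i" if "i \<in> P" for i
      using assms(6)[OF that] by blast
    ultimately obtain T where "P \<subseteq> T" "T \<subseteq> A" "V \<inter> W \<inter> venn_cell X S A T \<noteq> {}"
      by (rule open_meets_venn_cell[OF assms(1,2) _ _ assms(5)])
    then show ?thesis
      unfolding cells_def by blast
  qed
  moreover have "x \<in> topspace X"
    using assms(4) in_closure_of[of x X W] by blast
  ultimately have "x \<in> X closure_of \<Union>cells"
    unfolding in_closure_of by blast
  then obtain C where "C \<in> cells" "x \<in> X closure_of C"
    using closure_of_Union[OF \<open>finite cells\<close>] by blast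
  then show ?thesis
    using that unfolding cells_def by blast
qed

lemma quasi_continuous_adherent_venn_cell:
  assumes g: "quasi_continuous X Z g" and F: "finite F"
    and U: "\<And>p. p \<in> F \<Longrightarrow> openin Z (U p)" "\<And>p. p \<in> F \<Longrightarrow> g p \<in> U p"
    and x: "x \<in> topspace X"
  shows "\<exists>T. T \<subseteq> F \<and> (x \<in> F \<longrightarrow> x \<in> T) \<and>
           x \<in> X closure_of venn_cell X (\<lambda>p. X interior_of {z \<in> topspace X. g z \<in> U p}) F T"
proof -
  define S where "S = (\<lambda>p. X interior_of {z \<in> topspace X. g z \<in> U p})"
  have S_open: "openin X (S p)" for p
    by (simp add: S_def)
  have "\<exists>T. T \<subseteq> F \<and> (x \<in> F \<longrightarrow> x \<in> T) \<and> x \<in> X closure_of venn_cell X S F T"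
  proof (cases "x \<in> F")
    case True
    have "quasi_continuous_at X Z g x"
      using g x unfolding quasi_continuous_def by blast
    then have "x \<in> X closure_of S x"
      unfolding S_def using x U(1,2)[OF True] by (rule quasi_continuous_at_in_closure_of_interior)
    moreover have "{x} \<subseteq> F"
      using True by blast
    moreover have "S x \<subseteq> S i" if "i \<in> {x}" for i
      using that by blast
    ultimately obtain T where "{x} \<subseteq> T" "T \<subseteq> F" "x \<in> X closure_of venn_cell X S F T"
      by (rule in_closure_of_venn_cell[OF F S_open S_open])
    then show ?thesis
      by blast
  next
    case False
    have "x \<in> X closure_of topspace X"
      using x by simp
    moreover have "topspace X \<subseteq> S i" if "i \<in> {}" for i
      using that by blast
    ultimately obtain T where "{} \<subseteq> T" "T \<subseteq> F" "x \<in> X closure_of venn_cell X S F T"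
      by (rule in_closure_of_venn_cell[OF F S_open openin_topspace _ empty_subsetI])
    then show ?thesis
      using False by blast
  qed
  then show ?thesis
    unfolding S_def .
qed

lemma quasi_continuous_approx_lift:
  assumes g: "quasi_continuous X Z g" and lift: "topspace Z \<subseteq> r ` topspace Y"
    and F: "finite F" "F \<subseteq> topspace X"
    and U: "\<And>p. p \<in> F \<Longrightarrow> openin Z (U p)" "\<And>p. p \<in> F \<Longrightarrow> g p \<in> U p"
  shows "\<exists>f \<in> QC X Y. \<forall>p \<in> F. r (f p) \<in> U p"
proof -
  define S where "S = (\<lambda>p. X interior_of {z \<in> topspace X. g z \<in> U p})"
  have "\<forall>x \<in> topspace X. \<exists>T. T \<subseteq> F \<and> (x \<in> F \<longrightarrow> x \<in> T) \<and> x \<in> X closure_of venn_cell X S F T"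
    unfolding S_def using quasi_continuous_adherent_venn_cell[OF g F(1) U] by blast
  then obtain T where
    "\<forall>x \<in> topspace X. T x \<subseteq> F \<and> (x \<in> F \<longrightarrow> x \<in> T x) \<and> x \<in> X closure_of venn_cell X S F (T x)"
    by (rule bchoice[elim_format]) blast
  then have T: "\<And>x. x \<in> topspace X \<Longrightarrow> T x \<subseteq> F"
      "\<And>x. x \<in> topspace X \<Longrightarrow> x \<in> F \<Longrightarrow> x \<in> T x"
      "\<And>x. x \<in> topspace X \<Longrightarrow> x \<in> X closure_of venn_cell X S F (T x)"
    by blast+
  have cell_nonempty: "venn_cell X S F (T x) \<noteq> {}" if "x \<in> topspace X" for x
    using T(3)[OF that] by (metis closure_of_empty empty_iff)
  have g_funspace: "g \<in> topspace X \<rightarrow> topspace Z"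
    using g unfolding quasi_continuous_def by blast
  have "\<forall>A \<in> {A. venn_cell X S F A \<noteq> {}}. \<exists>y. y \<in> topspace Y \<and> (\<forall>p \<in> A. r y \<in> U p)"
  proof
    fix A assume "A \<in> {A. venn_cell X S F A \<noteq> {}}"
    then have "venn_cell X S F A \<noteq> {}"
      by simp
    then obtain z where z: "z \<in> venn_cell X S F A"
      by blast
    have "g z \<in> topspace Z"
      using g_funspace venn_cellD(1)[OF z] by (rule funcset_mem)
    then have "g z \<in> r ` topspace Y"
      using lift by blast
    then obtain y where y: "g z = r y" "y \<in> topspace Y"
      by (rule imageE)
    have "g z \<in> U p" if "p \<in> A" for p
    proof -
      have "z \<in> S p"
        using z that by (rule venn_cellD(2))
      then have "z \<in> {z \<in> topspace X. g z \<in> U p}"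
        unfolding S_def by (rule subsetD[OF interior_of_subset])
      then show ?thesis
        by simp
    qed
    then have "\<forall>p \<in> A. r y \<in> U p"
      using y(1) by simp
    with y(2) show "\<exists>y. y \<in> topspace Y \<and> (\<forall>p \<in> A. r y \<in> U p)"
      by blast
  qed
  then obtain y where "\<forall>A \<in> {A. venn_cell X S F A \<noteq> {}}. y A \<in> topspace Y \<and> (\<forall>p \<in> A. r (y A) \<in> U p)"
    by (rule bchoice[elim_format]) blast
  then have y: "\<And>A. venn_cell X S F A \<noteq> {} \<Longrightarrow> y A \<in> topspace Y"
      "\<And>A p. venn_cell X S F A \<noteq> {} \<Longrightarrow> p \<in> A \<Longrightarrow> r (y A) \<in> U p"
    by blast+
  define f where "f = restrict (\<lambda>x. y (T x)) (topspace X)"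
  have "quasi_continuous X Y f"
    unfolding f_def
  proof (rule quasi_continuous_piecewise_constant[where \<A> = "Pow F" and C = "venn_cell X S F"])
    show "openin X (venn_cell X S F A)" for A
      by (rule openin_venn_cell)
    show "A = B" if "A \<in> Pow F" "B \<in> Pow F" "z \<in> venn_cell X S F A" "z \<in> venn_cell X S F B" for A B z
      using that by (intro venn_cells_disjoint) auto
    show "T x \<in> Pow F \<and> x \<in> X closure_of venn_cell X S F (T x)" if "x \<in> topspace X" for x
      using T(1,3)[OF that] by blast
    show "y (T x) \<in> topspace Y" if "x \<in> topspace X" for x
      using that by (intro y(1) cell_nonempty)
  qed
  moreover have "f \<in> extensional (topspace X)"
    unfolding f_def by simp
  ultimately have "f \<in> QC X Y"
    unfolding QC_def by blast
  moreover have "r (f p) \<in> U p" if "p \<in> F" for p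
  proof -
    have p: "p \<in> topspace X"
      using F(2) that by blast
    have "r (y (T p)) \<in> U p"
      by (rule y(2)[OF cell_nonempty[OF p] T(2)[OF p that]])
    then show ?thesis
      using p unfolding f_def by simp
  qed
  ultimately show ?thesis
    by blast
qed

lemma topspace_QP: "topspace (QP X Y) = QC X Y"
  unfolding QP_def QC_def quasi_continuous_def
  by (auto simp: PiE_iff extensional_def)

lemma QC_in_PiE:
  assumes "h \<in> QC X Y" "\<And>p. p \<in> topspace X \<Longrightarrow> U p \<noteq> topspace Y \<Longrightarrow> h p \<in> U p"
  shows "h \<in> Pi\<^sub>E (topspace X) U"
proof -
  have h: "h \<in> topspace X \<rightarrow> topspace Y" "h \<in> extensional (topspace X)"
    using assms(1) unfolding QC_def quasi_continuous_def by blast+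
  have "h p \<in> U p" if p: "p \<in> topspace X" for p
  proof (cases "U p = topspace Y")
    case True
    then show ?thesis
      using h(1) p by (simp add: Pi_iff)
  next
    case False
    then show ?thesis
      using assms(2) p by blast
  qed
  then show ?thesis
    using h(2) by (simp add: PiE_iff)
qed

lemma in_QP_closure_ofI:
  assumes "g \<in> QC X Y" "A \<subseteq> QC X Y"
    and approx: "\<And>F U. \<lbrakk>finite F; F \<subseteq> topspace X; \<And>p. p \<in> F \<Longrightarrow> openin Y (U p);
                        \<And>p. p \<in> F \<Longrightarrow> g p \<in> U p\<rbrakk> \<Longrightarrow> \<exists>h\<in>A. \<forall>p\<in>F. h p \<in> U p"
  shows "g \<in> QP X Y closure_of A"
  unfolding in_closure_of
proof (intro conjI allI impI)
  show "g \<in> topspace (QP X Y)"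
    using assms(1) by (simp add: topspace_QP)
  fix N assume "g \<in> N \<and> openin (QP X Y) N"
  then have "g \<in> N" "openin (QP X Y) N"
    by blast+
  then obtain N' where N': "openin (product_topology (\<lambda>_. Y) (topspace X)) N'" "N = N' \<inter> QC X Y"
    unfolding QP_def openin_subtopology by blast
  then obtain U where U: "finite {p \<in> topspace X. U p \<noteq> topspace Y}" "\<forall>p\<in>topspace X. openin Y (U p)"
      "g \<in> Pi\<^sub>E (topspace X) U" "Pi\<^sub>E (topspace X) U \<subseteq> N'"
    using \<open>g \<in> N\<close> unfolding openin_product_topology_alt by blast
  define F where "F = {p \<in> topspace X. U p \<noteq> topspace Y}"
  have "\<exists>h\<in>A. \<forall>p\<in>F. h p \<in> U p"
  proof (rule approx)
    show "finite F" "F \<subseteq> topspace X"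
      using U(1) unfolding F_def by auto
    show "openin Y (U p)" if "p \<in> F" for p
      using U(2) that unfolding F_def by blast
    show "g p \<in> U p" if "p \<in> F" for p
      using PiE_mem[OF U(3)] that unfolding F_def by blast
  qed
  then obtain h where h: "h \<in> A" "\<forall>p\<in>F. h p \<in> U p"
    by blast
  have hQ: "h \<in> QC X Y"
    using h(1) assms(2) by blast
  moreover have "h p \<in> U p" if "p \<in> topspace X" "U p \<noteq> topspace Y" for p
    using h(2) that unfolding F_def by blast
  ultimately have "h \<in> Pi\<^sub>E (topspace X) U"
    by (rule QC_in_PiE)
  then show "\<exists>h. h \<in> A \<and> h \<in> N"
    using U(4) N' hQ h(1) by blast
qed

theorem mainTheorem12:
  fixes X :: "'a topology" and Y :: "'b topology" and Z :: "'c topology"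
    and r :: "'b \<Rightarrow> 'c"
  assumes "continuous_map Y Z r"
    and "r ` topspace Y = topspace Z"
  shows "(QP X Z) closure_of (induced_map X r ` QC X Y) = topspace (QP X Z)"
proof -
  have "g \<in> QP X Z closure_of (induced_map X r ` QC X Y)" if g: "g \<in> QC X Z" for g
  proof (rule in_QP_closure_ofI[OF g])
    show "induced_map X r ` QC X Y \<subseteq> QC X Z"
      using induced_map_in_QC[OF assms(1)] by blast
    fix F U
    assume F: "finite F" "F \<subseteq> topspace X"
      and U: "\<And>p. p \<in> F \<Longrightarrow> openin Z (U p)" "\<And>p. p \<in> F \<Longrightarrow> g p \<in> U p"
    have qc: "quasi_continuous X Z g"
      using g unfolding QC_def by blast
    have lift: "topspace Z \<subseteq> r ` topspace Y"
      using assms(2) by simp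
    obtain f where f: "f \<in> QC X Y" "\<forall>p \<in> F. r (f p) \<in> U p"
      using quasi_continuous_approx_lift[OF qc lift F U] by blast
    have "induced_map X r f p \<in> U p" if "p \<in> F" for p
      using F(2) that f(2) unfolding induced_map_def by auto
    then show "\<exists>h \<in> induced_map X r ` QC X Y. \<forall>p\<in>F. h p \<in> U p"
      using f(1) by blast
  qed
  then have "topspace (QP X Z) \<subseteq> QP X Z closure_of (induced_map X r ` QC X Y)"
    unfolding topspace_QP by blast
  then show ?thesis
    by (rule subset_antisym[OF closure_of_subset_topspace])
qed

end
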